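(* Let $n\ge 3$ and let $K$ be a proper $4$-coloring of $H_2(n,n-1)$. (a) If $x_1,x_2,x_3,x_4$ are vertices forming a path of length $3$ (in this order) all of whose edges $(x_1,x_2),(x_2,x_3),(x_3,x_4)$ are transition edges for $K$, then $K(x_1),K(x_2),K(x_3),K(x_4)$ are pairwise distinct. (b) There is no simple path in $H_2(n,n-1)$ of length greater than $3$ all of whose edges are transition edges for $K$.
   Context: $H_2(n,n-1)$ is the simple undirected graph with vertex set $\mathbb{Z}_2^n$ in which $x,y$ are adjacent iff their Hamming distance is at least $n-1$. For a proper $k$-coloring $K$ of a simple graph, an edge $(x,y)$ is a transition edge for $K$ if swapping the colors of $x$ and $y$ (all other colors unchanged) yields again a proper $k$-coloring. *)

theory Defs
  imports Main
begin

text \<open>Vertices of H_2(n,n-1): elements of Z_2^n, represented as boolean lists of length n.\<close>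
definition cube :: "nat \<Rightarrow> bool list set" where
  "cube n = {x. length x = n}"

definition hamming :: "bool list \<Rightarrow> bool list \<Rightarrow> nat" where
  "hamming x y = card {i. i < length x \<and> x ! i \<noteq> y ! i}"

definition H_adj :: "nat \<Rightarrow> bool list \<Rightarrow> bool list \<Rightarrow> bool" where
  "H_adj n x y \<longleftrightarrow> x \<in> cube n \<and> y \<in> cube n \<and> x \<noteq> y \<and> hamming x y \<ge> n - 1"

definition proper_coloring ::
  "'v set \<Rightarrow> ('v \<Rightarrow> 'v \<Rightarrow> bool) \<Rightarrow> nat \<Rightarrow> ('v \<Rightarrow> nat) \<Rightarrow> bool" where
  "proper_coloring V E k K \<longleftrightarrow>
     (\<forall>v\<in>V. K v < k) \<and> (\<forall>u\<in>V. \<forall>v\<in>V. E u v \<longrightarrow> K u \<noteq> K v)"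

definition transition_edge ::
  "'v set \<Rightarrow> ('v \<Rightarrow> 'v \<Rightarrow> bool) \<Rightarrow> nat \<Rightarrow> ('v \<Rightarrow> nat) \<Rightarrow> 'v \<Rightarrow> 'v \<Rightarrow> bool" where
  "transition_edge V E k K x y \<longleftrightarrow>
     E x y \<and> proper_coloring V E k (K(x := K y, y := K x))"

text \<open>A simple path given by its vertex list: distinct vertices of V, consecutive ones adjacent.
  Its length is the number of edges, i.e. length xs - 1.\<close>
definition simple_path :: "'v set \<Rightarrow> ('v \<Rightarrow> 'v \<Rightarrow> bool) \<Rightarrow> 'v list \<Rightarrow> bool" where
  "simple_path V E xs \<longleftrightarrow> xs \<noteq> [] \<and> set xs \<subseteq> V \<and> distinct xs \<and>
     (\<forall>i. Suc i < length xs \<longrightarrow> E (xs ! i) (xs ! Suc i))"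

end

theory Submission imports Defs begin

text \<open>The neighbours of a vertex x of H_2(n,n-1) are the n+1 vertices obtained from x by
  complementing all coordinates or all but one. These complementation maps are commuting
  involutions preserving the Hamming distance, so each of them is a graph automorphism.
  If (x1,x2) and (x2,x3) are transition edges, then every other neighbour of x2 avoids the three
  colours of x1, x2, x3. With n+1 \<ge> 4 directions there is a direction e different from those of
  the edges of the path x1 x2 x3 x4; the edge between the e-neighbours of x2 and x3 is parallel to
  (x2,x3), and both its ends would get the fourth colour unless K x1 \<noteq> K x4. The same argument
  shows that along a transition path the edge directions repeat with period two, so a transition
  path on five vertices would close up.\<close>

lemma transition_edge_swap:
  assumes "\<And>u v. E u v \<Longrightarrow> E v u" and "transition_edge V E k K x y"
  shows "transition_edge V E k K y x"
  using assms by (cases "x = y") (auto simp: transition_edge_def fun_upd_twist)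

lemma transition_edge_neighbour_colour:
  assumes "transition_edge V E k K x y" and "E y z" "y \<in> V" "z \<in> V" "z \<noteq> x" "z \<noteq> y"
  shows "K z \<noteq> K x"
proof -
  let ?K' = "K(x := K y, y := K x)"
  have "proper_coloring V E k ?K'"
    using assms(1) by (simp add: transition_edge_def)
  then have "?K' y \<noteq> ?K' z"
    using assms(2-4) unfolding proper_coloring_def by blast
  then show ?thesis
    using assms(5,6) by simp
qed

lemma transition_path_neighbour_colour:
  assumes sym: "\<And>u v. E u v \<Longrightarrow> E v u" and dom: "\<And>u v. E u v \<Longrightarrow> u \<in> V"
    and K: "proper_coloring V E k K"
    and xy: "transition_edge V E k K x y" and yz: "transition_edge V E k K y z"
    and yw: "E y w" and "w \<noteq> x" "w \<noteq> z"
  shows "K w \<notin> {K x, K y, K z}"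
proof -
  have V: "y \<in> V" "w \<in> V"
    using yw dom sym by blast+
  have "K y \<noteq> K w"
    using K yw V by (simp add: proper_coloring_def)
  moreover have "w \<noteq> y"
    using calculation by blast
  moreover have "K w \<noteq> K x"
    using transition_edge_neighbour_colour[OF xy yw V] \<open>w \<noteq> x\<close> \<open>w \<noteq> y\<close> by blast
  moreover have "K w \<noteq> K z"
    using transition_edge_neighbour_colour[OF transition_edge_swap[OF sym yz] yw V]
      \<open>w \<noteq> z\<close> \<open>w \<noteq> y\<close> by blast
  ultimately show ?thesis
    by auto
qed

lemma simple_path_singleton [simp]: "simple_path V E [x] \<longleftrightarrow> x \<in> V"
  by (simp add: simple_path_def)

lemma simple_path_Cons_Cons [simp]:
  "simple_path V E (x # y # xs) \<longleftrightarrow>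
     x \<in> V \<and> E x y \<and> x \<notin> set (y # xs) \<and> simple_path V E (y # xs)"
  unfolding simple_path_def by (auto simp: nth_Cons less_Suc_eq_0_disj)

lemma simple_path_appendD:
  assumes "simple_path V E (xs @ ys)" and "xs \<noteq> []"
  shows "simple_path V E xs"
proof -
  have "E (xs ! i) (xs ! Suc i)" if "Suc i < length xs" for i
  proof -
    have "E ((xs @ ys) ! i) ((xs @ ys) ! Suc i)"
      using assms(1) that by (simp add: simple_path_def)
    then show ?thesis
      using that by (simp add: nth_append)
  qed
  then show ?thesis
    using assms by (auto simp: simple_path_def)
qed

section \<open>The neighbourhood structure of H_2(n,n-1)\<close>

definition flip :: "nat option \<Rightarrow> bool list \<Rightarrow> bool list" where
  "flip e x = (case e of None \<Rightarrow> map Not x | Some i \<Rightarrow> (map Not x)[i := x ! i])"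

definition directions :: "nat \<Rightarrow> nat option set" where
  "directions n = insert None (Some ` {..<n})"

lemma length_flip [simp]: "length (flip e x) = length x"
  by (cases e) (auto simp: flip_def)

lemma nth_flip: "i < length x \<Longrightarrow> flip e x ! i = (if e = Some i then x ! i else \<not> x ! i)"
  by (cases e) (auto simp: flip_def nth_list_update)

lemma flip_flip [simp]: "flip e (flip e x) = x"
  by (rule nth_equalityI) (auto simp: nth_flip)

lemma flip_commute: "flip e (flip f x) = flip f (flip e x)"
  by (rule nth_equalityI) (auto simp: nth_flip)

lemma flip_in_cube [simp]: "flip e x \<in> cube n \<longleftrightarrow> x \<in> cube n"
  by (simp add: cube_def)

lemma card_directions: "card (directions n) = Suc n"
  unfolding directions_def by (subst card_insert_disjoint) (auto simp: card_image)

lemma direction_avoiding_three: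
  assumes "n \<ge> 3"
  obtains e where "e \<in> directions n" "e \<notin> {d1, d2, d3}"
proof -
  have "card {d1, d2, d3} \<le> 3"
    by (simp add: card_insert_le_m1)
  then have "card {d1, d2, d3} < card (directions n)"
    using card_directions[of n] assms by simp
  then show ?thesis
    using that by (metis card_mono finite.emptyI finite.insertI not_le subsetI)
qed

lemma hamming_sym: "length x = length y \<Longrightarrow> hamming x y = hamming y x"
  unfolding hamming_def by (metis (mono_tags))

lemma hamming_flip: "length x = length y \<Longrightarrow> hamming (flip e x) (flip e y) = hamming x y"
  unfolding hamming_def length_flip
  by (rule arg_cong[where f = card], rule Collect_cong) (auto simp: nth_flip split: if_splits)

lemma hamming_flip_self:
  assumes "e \<in> directions (length x)"
  shows "hamming x (flip e x) = (if e = None then length x else length x - 1)"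
proof (cases e)
  case None
  then have "{i. i < length x \<and> x ! i \<noteq> flip e x ! i} = {..<length x}"
    by (auto simp: nth_flip)
  then show ?thesis
    using None by (simp add: hamming_def)
next
  case (Some j)
  then have "j < length x"
    using assms by (auto simp: directions_def)
  moreover have "{i. i < length x \<and> x ! i \<noteq> flip e x ! i} = {..<length x} - {j}"
    using Some by (auto simp: nth_flip)
  ultimately show ?thesis
    using Some by (simp add: hamming_def)
qed

lemma H_adj_in_cube: "H_adj n x y \<Longrightarrow> x \<in> cube n"
  by (simp add: H_adj_def)

lemma H_adj_sym: "H_adj n x y \<Longrightarrow> H_adj n y x"
  by (auto simp: H_adj_def cube_def hamming_sym)

lemma H_adj_flip:
  assumes "x \<in> cube n" "e \<in> directions n" "n \<ge> 2"
  shows "H_adj n x (flip e x)"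
proof -
  have len: "length x = n"
    using assms(1) by (simp add: cube_def)
  then have ham: "hamming x (flip e x) \<ge> n - 1"
    using hamming_flip_self[of e x] assms(2) by simp
  moreover have "x \<noteq> flip e x"
  proof
    assume "x = flip e x"
    then have "hamming x (flip e x) = 0"
      by (simp add: hamming_def)
    then show False
      using ham assms(3) by simp
  qed
  ultimately show ?thesis
    using assms(1) by (simp add: H_adj_def)
qed

lemma H_adj_imp_flip:
  assumes "H_adj n x y"
  shows "\<exists>e\<in>directions n. y = flip e x"
proof -
  have len: "length x = n" "length y = n"
    using assms by (auto simp: H_adj_def cube_def)
  define S where "S = {i. i < n \<and> x ! i \<noteq> y ! i}"
  have card_S: "card S \<ge> n - 1"
    using assms len by (simp add: H_adj_def hamming_def S_def)
  have S_sub: "S \<subseteq> {..<n}"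
    by (auto simp: S_def)
  show ?thesis
  proof (cases "S = {..<n}")
    case True
    have "y = flip None x"
      by (rule nth_equalityI) (use True len in \<open>auto simp: nth_flip S_def set_eq_iff\<close>)
    then show ?thesis
      by (auto simp: directions_def)
  next
    case False
    then obtain j where j: "j < n" "j \<notin> S"
      using S_sub by auto
    then have "S \<subseteq> {..<n} - {j}" and "card ({..<n} - {j}) = n - 1"
      using S_sub by auto
    then have S_eq: "S = {..<n} - {j}"
      using card_S by (metis card_seteq finite_Diff finite_lessThan)
    have "y = flip (Some j) x"
      by (rule nth_equalityI) (use S_eq len in \<open>auto simp: nth_flip S_def set_eq_iff\<close>)
    then show ?thesis
      using j by (auto simp: directions_def)
  qed
qed

lemma flip_eq_flip_iff:
  assumes "x \<in> cube n" "e \<in> directions n" "f \<in> directions n"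
  shows "flip e x = flip f x \<longleftrightarrow> e = f"
proof
  assume eq: "flip e x = flip f x"
  have len: "length x = n"
    using assms(1) by (simp add: cube_def)
  have "e = Some i \<longleftrightarrow> f = Some i" if "i < n" for i
    using arg_cong[OF eq, of "\<lambda>z. z ! i"] that len by (auto simp: nth_flip split: if_splits)
  then show "e = f"
    using assms(2,3) by (cases e; cases f) (auto simp: directions_def)
qed simp

lemma H_adj_flip_flip:
  assumes "H_adj n x y"
  shows "H_adj n (flip e x) (flip e y)"
proof -
  have "flip e x \<noteq> flip e y"
    using assms by (metis H_adj_def flip_flip)
  then show ?thesis
    using assms by (simp add: H_adj_def cube_def hamming_flip)
qed

section \<open>Transition paths in a proper 4-colouring\<close>

lemma proper_coloring_H_adj:
  assumes "proper_coloring (cube n) (H_adj n) k K"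
  shows "\<And>x. x \<in> cube n \<Longrightarrow> K x < k" and "\<And>x y. H_adj n x y \<Longrightarrow> K x \<noteq> K y"
  using assms by (auto simp: proper_coloring_def H_adj_def)

lemma Diff_card_Suc_unique:
  assumes "finite C" "A \<subseteq> C" "card C = Suc (card A)" "x \<in> C - A" "y \<in> C - A"
  shows "x = y"
proof -
  have "card (C - A) = 1"
    using assms(1-3) by (simp add: card_Diff_subset finite_subset)
  then obtain z where "C - A = {z}"
    by (rule card_1_singletonE)
  then show ?thesis
    using assms(4,5) by simp
qed

text \<open>The edge from flip e x2 to flip e x3 is parallel to (x2,x3); its first end avoids the
  colours of x1, x2, x3, so its other end cannot avoid them as well.\<close>

lemma transition_path_flip_colour:
  assumes n: "n \<ge> 2" and K: "proper_coloring (cube n) (H_adj n) 4 K"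
    and t12: "transition_edge (cube n) (H_adj n) 4 K x1 x2"
    and t23: "transition_edge (cube n) (H_adj n) 4 K x2 x3"
    and e: "e \<in> directions n" and u: "flip e x2 \<notin> {x1, x3}"
    and distinct: "distinct [K x1, K x2, K x3]"
  shows "K (flip e x3) \<in> {K x1, K x2, K x3}"
proof (rule ccontr)
  assume w: "K (flip e x3) \<notin> {K x1, K x2, K x3}"
  have a12: "H_adj n x1 x2" and a23: "H_adj n x2 x3"
    using t12 t23 by (simp_all add: transition_edge_def)
  then have cube: "x1 \<in> cube n" "x2 \<in> cube n" "x3 \<in> cube n"
    by (auto simp: H_adj_def)
  have u_colour: "K (flip e x2) \<notin> {K x1, K x2, K x3}"
    by (rule transition_path_neighbour_colour[OF _ _ K t12 t23])
      (use H_adj_sym H_adj_in_cube H_adj_flip[OF cube(2) e n] u in auto)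
  have colours: "{K (flip e x2), K (flip e x3), K x1, K x2, K x3} \<subseteq> {..<4}"
    using proper_coloring_H_adj(1)[OF K] cube by simp
  have "K (flip e x2) = K (flip e x3)"
  proof (rule Diff_card_Suc_unique[of "{..<4}" "{K x1, K x2, K x3}"])
    show "card {..<4::nat} = Suc (card {K x1, K x2, K x3})"
      using distinct by simp
  qed (use colours u_colour w in auto)
  moreover have "H_adj n (flip e x2) (flip e x3)"
    using H_adj_flip_flip[OF a23] .
  ultimately show False
    using proper_coloring_H_adj(2)[OF K] by blast
qed

lemma transition_path_colours_distinct:
  assumes n: "n \<ge> 3" and K: "proper_coloring (cube n) (H_adj n) 4 K"
    and path: "simple_path (cube n) (H_adj n) [x1, x2, x3, x4]"
    and t12: "transition_edge (cube n) (H_adj n) 4 K x1 x2"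
    and t23: "transition_edge (cube n) (H_adj n) 4 K x2 x3"
    and t34: "transition_edge (cube n) (H_adj n) 4 K x3 x4"
  shows "distinct [K x1, K x2, K x3, K x4]"
proof -
  have a12: "H_adj n x1 x2" and a23: "H_adj n x2 x3" and a34: "H_adj n x3 x4"
    and cube: "x2 \<in> cube n" "x3 \<in> cube n" and distinct: "distinct [x1, x2, x3, x4]"
    using path by auto
  have adjacent: "K x1 \<noteq> K x2" "K x2 \<noteq> K x3" "K x3 \<noteq> K x4"
    using a12 a23 a34 proper_coloring_H_adj(2)[OF K] by blast+
  have "K x1 \<noteq> K x3"
    using transition_edge_neighbour_colour[OF transition_edge_swap[OF H_adj_sym t23]
        H_adj_sym[OF a12] cube(1) H_adj_in_cube[OF a12]] distinct by auto
  moreover have "K x4 \<noteq> K x2"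
    using transition_edge_neighbour_colour[OF t23 a34 cube(2) H_adj_in_cube[OF H_adj_sym[OF a34]]]
      distinct by auto
  moreover have "K x1 \<noteq> K x4"
  proof -
    obtain d1 d2 d3 where d: "d1 \<in> directions n" "d2 \<in> directions n" "d3 \<in> directions n"
      and x: "x1 = flip d1 x2" "x3 = flip d2 x2" "x2 = flip d2 x3" "x4 = flip d3 x3"
      using H_adj_imp_flip[OF a12] H_adj_imp_flip[OF a23] H_adj_imp_flip[OF a34]
      by (metis flip_flip)
    obtain e where e: "e \<in> directions n" "e \<notin> {d1, d2, d3}"
      using direction_avoiding_three[OF n] by blast
    have ne: "flip e x2 \<noteq> flip d x2" "flip e x3 \<noteq> flip d x3" if "d \<in> directions n" "d \<noteq> e" for d
      using flip_eq_flip_iff[OF cube(1) e(1) that(1)] flip_eq_flip_iff[OF cube(2) e(1) that(1)] that(2)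
      by auto
    have "flip e x2 \<notin> {x1, x3}"
      using ne(1)[OF d(1)] ne(1)[OF d(2)] e(2) x(1,2) by auto
    have w: "flip e x3 \<notin> {x2, x4}"
      using ne(2)[OF d(2)] ne(2)[OF d(3)] e(2) x(3,4) by auto
    from \<open>flip e x2 \<notin> {x1, x3}\<close> have "K (flip e x3) \<in> {K x1, K x2, K x3}"
      using transition_path_flip_colour[OF _ K t12 t23 e(1)] n adjacent \<open>K x1 \<noteq> K x3\<close> by simp
    moreover have "K (flip e x3) \<notin> {K x2, K x3, K x4}"
      by (rule transition_path_neighbour_colour[OF _ _ K t23 t34])
        (use H_adj_sym H_adj_in_cube H_adj_flip[OF cube(2) e(1)] n w in auto)
    ultimately show ?thesis
      by auto
  qed
  ultimately show ?thesis
    using adjacent by auto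
qed

lemma transition_path_flip_repeats:
  assumes n: "n \<ge> 3" and K: "proper_coloring (cube n) (H_adj n) 4 K"
    and path: "simple_path (cube n) (H_adj n) [x1, x2, x3, x4]"
    and t12: "transition_edge (cube n) (H_adj n) 4 K x1 x2"
    and t23: "transition_edge (cube n) (H_adj n) 4 K x2 x3"
    and t34: "transition_edge (cube n) (H_adj n) 4 K x3 x4"
    and e: "e \<in> directions n" "x4 = flip e x3"
  shows "x2 = flip e x1"
proof -
  have colours: "distinct [K x1, K x2, K x3, K x4]"
    using transition_path_colours_distinct[OF n K path t12 t23 t34] .
  have "flip e x2 \<noteq> x3"
    using path e(2) by auto
  moreover have "flip e x2 \<in> {x1, x3}"
  proof (rule ccontr)
    assume "flip e x2 \<notin> {x1, x3}"
    then have "K x4 \<in> {K x1, K x2, K x3}"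
      using transition_path_flip_colour[OF _ K t12 t23 e(1)] n colours e(2) by simp
    then show False
      using colours by auto
  qed
  ultimately show ?thesis
    by auto
qed

lemma no_transition_path_5:
  assumes n: "n \<ge> 3" and K: "proper_coloring (cube n) (H_adj n) 4 K"
    and path: "simple_path (cube n) (H_adj n) [x0, x1, x2, x3, x4]"
    and t01: "transition_edge (cube n) (H_adj n) 4 K x0 x1"
    and t12: "transition_edge (cube n) (H_adj n) 4 K x1 x2"
    and t23: "transition_edge (cube n) (H_adj n) 4 K x2 x3"
    and t34: "transition_edge (cube n) (H_adj n) 4 K x3 x4"
  shows False
proof -
  have path0: "simple_path (cube n) (H_adj n) [x0, x1, x2, x3]"
    and path1: "simple_path (cube n) (H_adj n) [x1, x2, x3, x4]"
    using path by auto
  have "H_adj n x2 x3" and "H_adj n x3 x4"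
    using path by auto
  obtain d where d: "d \<in> directions n" "x3 = flip d x2"
    using H_adj_imp_flip[OF \<open>H_adj n x2 x3\<close>] by blast
  obtain f where f: "f \<in> directions n" "x4 = flip f x3"
    using H_adj_imp_flip[OF \<open>H_adj n x3 x4\<close>] by blast
  have "x1 = flip d x0"
    using transition_path_flip_repeats[OF n K path0 t01 t12 t23 d] .
  moreover have "x2 = flip f x1"
    using transition_path_flip_repeats[OF n K path1 t12 t23 t34 f] .
  ultimately have "x4 = x0"
    using d(2) f(2) by (metis flip_commute flip_flip)
  then show False
    using path by auto
qed

theorem lemma5p5:
  fixes n :: nat and K :: "bool list \<Rightarrow> nat"
  assumes "n \<ge> 3"
    and "proper_coloring (cube n) (H_adj n) 4 K"
  shows "(\<forall>x1 x2 x3 x4. simple_path (cube n) (H_adj n) [x1, x2, x3, x4] \<and>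
            transition_edge (cube n) (H_adj n) 4 K x1 x2 \<and>
            transition_edge (cube n) (H_adj n) 4 K x2 x3 \<and>
            transition_edge (cube n) (H_adj n) 4 K x3 x4 \<longrightarrow>
            distinct [K x1, K x2, K x3, K x4])
       \<and> \<not> (\<exists>xs. simple_path (cube n) (H_adj n) xs \<and> length xs - 1 > 3 \<and>
            (\<forall>i. Suc i < length xs \<longrightarrow>
               transition_edge (cube n) (H_adj n) 4 K (xs ! i) (xs ! Suc i)))"
proof (intro conjI allI impI notI)
  fix x1 x2 x3 x4
  assume "simple_path (cube n) (H_adj n) [x1, x2, x3, x4] \<and>
            transition_edge (cube n) (H_adj n) 4 K x1 x2 \<and>
            transition_edge (cube n) (H_adj n) 4 K x2 x3 \<and>
            transition_edge (cube n) (H_adj n) 4 K x3 x4"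
  then show "distinct [K x1, K x2, K x3, K x4]"
    using transition_path_colours_distinct[OF assms] by blast
next
  assume "\<exists>xs. simple_path (cube n) (H_adj n) xs \<and> length xs - 1 > 3 \<and>
            (\<forall>i. Suc i < length xs \<longrightarrow>
               transition_edge (cube n) (H_adj n) 4 K (xs ! i) (xs ! Suc i))"
  then obtain xs where path: "simple_path (cube n) (H_adj n) xs" and long: "length xs - 1 > 3"
    and transition: "\<forall>i. Suc i < length xs \<longrightarrow> transition_edge (cube n) (H_adj n) 4 K (xs ! i) (xs ! Suc i)"
    by blast
  have "5 \<le> length xs"
    using long by linarith
  then obtain x0 x1 x2 x3 x4 ys where xs: "xs = x0 # x1 # x2 # x3 # x4 # ys"
    by (auto simp: Suc_le_length_iff numeral_eq_Suc)
  have "simple_path (cube n) (H_adj n) [x0, x1, x2, x3, x4]"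
    using simple_path_appendD[of "cube n" "H_adj n" "[x0, x1, x2, x3, x4]" ys] path xs by simp
  moreover have "transition_edge (cube n) (H_adj n) 4 K x0 x1"
    "transition_edge (cube n) (H_adj n) 4 K x1 x2"
    "transition_edge (cube n) (H_adj n) 4 K x2 x3"
    "transition_edge (cube n) (H_adj n) 4 K x3 x4"
    using transition[rule_format, of 0] transition[rule_format, of 1]
      transition[rule_format, of 2] transition[rule_format, of 3]
    by (simp_all add: xs numeral_2_eq_2 numeral_3_eq_3)
  ultimately show False
    by (rule no_transition_path_5[OF assms])
qed

end
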